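(* Let $\sigma$ be a reflection on a lattice $L$, regarded also as a reflection on the torus $T=\mathrm{T}(1)\otimes L=(\mathbb{R}\otimes L)/L$. Then sending $b\in L$ to the residue class of $b/2$ in $T$ gives a bijection between markings $\pm(b,\beta)$ of $\sigma$ (on $L$) and elements $h\in T$ which are markings of $\sigma$ (on $T$).
   Context: A lattice is a free abelian group of finite rank. A reflection on $L$ is an automorphism conjugate in $GL(r,\mathbb{Q})$ to $\mathrm{diag}(-1,1,\dots,1)$. A strict marking of $\sigma$ on $L$ is a pair $(b,\beta)$ with $b\in L$, $\beta:L\to\mathbb{Z}$ a homomorphism, and $\sigma(x)=x+\beta(x)b$ for all $x\in L$; a marking is an equivalence class $\pm(b,\beta)$ of strict markings up to sign. On $T$ (written additively), $\sigma$ is trivial mod $2$ if it fixes every $x\in T$ with $2x=0$, and a marking of $\sigma$ is an element $h\in T$ lying in the identity component of $\{x\in T:\sigma(x)=-x\}$ (equivalently $h\in\mathrm{T}(1)\otimes\ker(1+\sigma)$), with $2h=0$, and with $h\neq0$ if $\sigma$ is nontrivial mod $2$. *)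

theory Defs
  imports "HOL-Analysis.Analysis"
begin

text \<open>The lattice L is modelled as int^'n (any lattice of rank r is isomorphic to Z^r);
  the rank is CARD('n). Automorphisms of L are integer matrices acting by *v.\<close>

definition rat_of_imat :: "int^'n^'n \<Rightarrow> rat^'n^'n" where
  "rat_of_imat A = (\<chi> i j. of_int (A$i$j))"

definition real_of_imat :: "int^'n^'n \<Rightarrow> real^'n^'n" where
  "real_of_imat A = (\<chi> i j. real_of_int (A$i$j))"

definition real_of_ivec :: "int^'n \<Rightarrow> real^'n" where
  "real_of_ivec x = (\<chi> i. real_of_int (x$i))"

definition lat_reflection :: "int^'n^'n \<Rightarrow> bool" where
  "lat_reflection \<sigma> \<longleftrightarrow>
     (\<exists>\<tau>. \<sigma> ** \<tau> = mat 1 \<and> \<tau> ** \<sigma> = mat 1) \<and>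
     (\<exists>(P::rat^'n^'n) (Q::rat^'n^'n) k. P ** Q = mat 1 \<and> Q ** P = mat 1 \<and>
        P ** rat_of_imat \<sigma> ** Q = (\<chi> i j. if i = j then (if i = k then -1 else 1) else 0))"

definition strict_marking :: "int^'n^'n \<Rightarrow> int^'n \<Rightarrow> (int^'n \<Rightarrow> int) \<Rightarrow> bool" where
  "strict_marking \<sigma> b \<beta> \<longleftrightarrow>
     (\<forall>x y. \<beta> (x + y) = \<beta> x + \<beta> y) \<and> (\<forall>x. \<sigma> *v x = x + \<beta> x *s b)"

definition lat_marking :: "int^'n^'n \<Rightarrow> ((int^'n) \<times> ((int^'n) \<Rightarrow> int)) set \<Rightarrow> bool" where
  "lat_marking \<sigma> m \<longleftrightarrow>
     (\<exists>b \<beta>. strict_marking \<sigma> b \<beta> \<and> m = {(b, \<beta>), (-b, \<lambda>x. - \<beta> x)})"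

text \<open>The torus T = (R tensor L)/L = R^n / Z^n; an element is the residue class of a real vector.\<close>
definition tcls :: "real^'n \<Rightarrow> (real^'n) set" where
  "tcls v = {w. \<forall>i. w$i - v$i \<in> \<int>}"

definition trivial_mod2 :: "int^'n^'n \<Rightarrow> bool" where
  "trivial_mod2 \<sigma> \<longleftrightarrow>
     (\<forall>v::real^'n. (\<forall>i. 2 * v$i \<in> \<int>) \<longrightarrow> (\<forall>i. (real_of_imat \<sigma> *v v)$i - v$i \<in> \<int>))"

text \<open>Marking of sigma on T: h in the image of T(1) tensor ker(1+sigma), i.e. the class of a
  vector in the real span of the sublattice ker(1+sigma) of L; with 2h = 0, and h \<noteq> 0
  if sigma is nontrivial mod 2.\<close>
definition torus_marking :: "int^'n^'n \<Rightarrow> (real^'n) set \<Rightarrow> bool" where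
  "torus_marking \<sigma> h \<longleftrightarrow>
     (\<exists>v. h = tcls v \<and>
        v \<in> span (real_of_ivec ` {z. \<sigma> *v z = - z}) \<and>
        (\<forall>i. 2 * v$i \<in> \<int>) \<and>
        (\<not> trivial_mod2 \<sigma> \<longrightarrow> (\<exists>i. v$i \<notin> \<int>)))"

end

(*
  Over the rationals a reflection is diag(-1, 1, ..., 1) up to conjugation, so sigma - 1 has
  rank one; clearing denominators writes it as x \<mapsto> beta0(x) p with p primitive in L.
  For every strict marking (b, beta), sigma^2 = 1 forces beta(b) = -2, hence b = c p with
  c dividing 2: the markings are \<plusminus>(p, beta0) and, exactly when beta0 takes only even
  values, \<plusminus>(2p, beta0/2). On the torus, T(1) \<otimes> ker(1 + sigma) is the circle R p / Z p,
  whose 2-torsion is {0, p/2}; the class of p/2 is nonzero and always a marking, while 0 is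
  one exactly when sigma is trivial mod 2, i.e. when beta0 is even. Halving b matches the
  two lists.
*)
theory Submission
  imports Defs
begin

lemma rat_of_imat_mult: "rat_of_imat (A ** B) = rat_of_imat A ** rat_of_imat B"
  by (simp add: rat_of_imat_def matrix_matrix_mult_def vec_eq_iff)

lemma rat_of_imat_mat: "rat_of_imat (mat n) = mat (of_int n)"
  by (simp add: rat_of_imat_def mat_def vec_eq_iff)

lemma rat_of_imat_inject: "rat_of_imat A = rat_of_imat B \<longleftrightarrow> A = B"
  by (simp add: rat_of_imat_def vec_eq_iff)

lemma diagonal_matrix_mult:
  "(\<chi> i j. if i = j then d i else 0) ** (\<chi> i j. if i = j then e i else 0) =
   (\<chi> i j. if i = j then d i * e i else (0::'a::semiring_1))"
proof -
  have "(\<Sum>l\<in>UNIV. (if i = l then d i else 0) * (if l = j then e l else 0)) =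
        (if i = j then d i * e i else 0)" for i j
  proof -
    have "(\<Sum>l\<in>UNIV. (if i = l then d i else 0) * (if l = j then e l else 0)) =
          (\<Sum>l\<in>UNIV. if l = i then d i * (if i = j then e i else 0) else 0)"
      by (intro sum.cong) auto
    then show ?thesis by simp
  qed
  then show ?thesis by (simp add: matrix_matrix_mult_def vec_eq_iff)
qed

lemma matrix_diagonal_matrix_entry:
  "(Q ** (\<chi> i j. if i = j then d i else 0) ** P) $ i $ j =
   (\<Sum>l\<in>UNIV. Q$i$l * d l * P$l$j :: 'a::semiring_1)"
proof -
  have "(Q ** (\<chi> i j. if i = j then d i else 0)) $ i $ l = Q$i$l * d l" for l
  proof -
    have "(\<Sum>m\<in>UNIV. Q$i$m * (if m = l then d m else 0)) =
          (\<Sum>m\<in>UNIV. if m = l then Q$i$l * d l else 0)"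
      by (intro sum.cong) auto
    then show ?thesis
      by (simp add: matrix_matrix_mult_def)
  qed
  then show ?thesis
    by (simp add: matrix_matrix_mult_def[of "Q ** _" P])
qed

lemma lat_reflection_conj_diagonal:
  fixes \<sigma> :: "int^'n^'n"
  assumes "lat_reflection \<sigma>"
  obtains P Q :: "rat^'n^'n" and k where "P ** Q = mat 1" "Q ** P = mat 1"
    and "rat_of_imat \<sigma> = Q ** (\<chi> i j. if i = j then (if i = k then -1 else 1) else 0) ** P"
proof -
  obtain P Q :: "rat^'n^'n" and k where PQ: "P ** Q = mat 1" "Q ** P = mat 1"
    and D: "P ** rat_of_imat \<sigma> ** Q = (\<chi> i j. if i = j then (if i = k then -1 else 1) else 0)"
    using assms unfolding lat_reflection_def by blast
  have "rat_of_imat \<sigma> = (Q ** P) ** rat_of_imat \<sigma> ** (Q ** P)"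
    using PQ by simp
  also have "\<dots> = Q ** (P ** rat_of_imat \<sigma> ** Q) ** P"
    by (simp add: matrix_mul_assoc)
  finally show thesis
    using that PQ unfolding D by blast
qed

lemma lat_reflection_involution:
  fixes \<sigma> :: "int^'n^'n"
  assumes "lat_reflection \<sigma>"
  shows "\<sigma> ** \<sigma> = mat 1"
proof -
  obtain P Q :: "rat^'n^'n" and k where PQ: "P ** Q = mat 1" "Q ** P = mat 1"
    and \<sigma>: "rat_of_imat \<sigma> = Q ** (\<chi> i j. if i = j then (if i = k then -1 else 1) else 0) ** P"
    (is "_ = Q ** ?D ** P")
    by (rule lat_reflection_conj_diagonal[OF assms])
  have DD: "?D ** ?D = mat 1"
    unfolding diagonal_matrix_mult by (simp add: mat_def vec_eq_iff)
  have "rat_of_imat (\<sigma> ** \<sigma>) = Q ** (?D ** (P ** Q) ** ?D) ** P"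
    unfolding rat_of_imat_mult \<sigma> by (simp only: matrix_mul_assoc)
  also have "\<dots> = mat 1"
    by (simp only: PQ DD matrix_mul_rid)
  finally have "rat_of_imat (\<sigma> ** \<sigma>) = rat_of_imat (mat 1)"
    by (simp add: rat_of_imat_mat)
  then show ?thesis
    by (simp only: rat_of_imat_inject)
qed

lemma lat_reflection_neq_id:
  fixes \<sigma> :: "int^'n^'n"
  assumes "lat_reflection \<sigma>"
  shows "\<sigma> \<noteq> mat 1"
proof
  assume "\<sigma> = mat 1"
  obtain P Q :: "rat^'n^'n" and k where "P ** Q = mat 1"
    and "P ** rat_of_imat \<sigma> ** Q = (\<chi> i j. if i = j then (if i = k then -1 else 1) else 0)"
    using assms unfolding lat_reflection_def by blast
  then have "(\<chi> i j. if i = j then (if i = k then -1 else 1) else 0) = (mat 1 :: rat^'n^'n)"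
    using \<open>\<sigma> = mat 1\<close> by (simp add: rat_of_imat_mat)
  then have "(\<chi> i j. if i = j then (if i = k then -1 else 1) else 0) $ k $ k =
      (mat 1 :: rat^'n^'n) $ k $ k"
    by (rule arg_cong)
  then show False
    by (simp add: mat_def)
qed

lemma lat_reflection_rank_one:
  fixes \<sigma> :: "int^'n^'n"
  assumes "lat_reflection \<sigma>"
  shows "\<exists>u w :: rat^'n. \<forall>i j. rat_of_int ((\<sigma> - mat 1)$i$j) = u$i * w$j"
proof -
  obtain P Q :: "rat^'n^'n" and k where QP: "Q ** P = mat 1"
    and \<sigma>: "rat_of_imat \<sigma> = Q ** (\<chi> i j. if i = j then (if i = k then -1 else 1) else 0) ** P"
    by (rule lat_reflection_conj_diagonal[OF assms])
  have entry: "rat_of_int ((\<sigma> - mat 1)$i$j) = (-2 * Q$i$k) * P$k$j" for i j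
  proof -
    have "rat_of_int (\<sigma>$i$j) = (\<Sum>l\<in>UNIV. Q$i$l * (if l = k then -1 else 1) * P$l$j)"
      using arg_cong[OF \<sigma>, of "\<lambda>A. A$i$j"]
      by (simp add: rat_of_imat_def matrix_diagonal_matrix_entry)
    also have "\<dots> = (\<Sum>l\<in>UNIV. Q$i$l * P$l$j - (if l = k then 2 * Q$i$k * P$k$j else 0))"
      by (intro sum.cong) auto
    also have "\<dots> = (Q ** P)$i$j - 2 * Q$i$k * P$k$j"
      by (simp add: sum_subtractf matrix_matrix_mult_def)
    finally show ?thesis
      using QP by (simp add: mat_def)
  qed
  show ?thesis
    by (intro exI[of _ "\<chi> i. -2 * Q$i$k"] exI[of _ "\<chi> j. P$k$j"] allI)
      (simp only: vec_lambda_beta entry)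
qed

lemma primitive_dvd:
  fixes p y :: "'a::comm_ring_1^'n"
  assumes "(\<Sum>i\<in>UNIV. y$i * p$i) = 1" and "\<And>i. d dvd k * p$i"
  shows "d dvd k"
proof -
  have "k = k * (\<Sum>i\<in>UNIV. y$i * p$i)"
    using assms(1) by simp
  also have "\<dots> = (\<Sum>i\<in>UNIV. y$i * (k * p$i))"
    by (simp add: sum_distrib_left algebra_simps)
  also have "d dvd \<dots>"
    using assms(2) by (intro dvd_sum) (rule dvd_mult)
  finally show ?thesis .
qed

lemma primitive_Ints:
  fixes p y :: "int^'n" and t :: "'a::comm_ring_1"
  assumes "(\<Sum>i\<in>UNIV. y$i * p$i) = 1" and "\<And>i. t * of_int (p$i) \<in> \<int>"
  shows "t \<in> \<int>"
proof -
  have "t = t * of_int (\<Sum>i\<in>UNIV. y$i * p$i)"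
    using assms(1) by simp
  also have "\<dots> = (\<Sum>i\<in>UNIV. of_int (y$i) * (t * of_int (p$i)))"
    by (simp add: sum_distrib_left algebra_simps)
  also have "\<dots> \<in> \<int>"
    by (intro Ints_sum Ints_mult[OF Ints_of_int assms(2)])
  finally show ?thesis .
qed

lemma primitive_multiple:
  fixes p y b :: "int^'n"
  assumes "(\<Sum>i\<in>UNIV. y$i * p$i) = 1" and "\<And>i. k * b$i = l * p$i" and "k \<noteq> 0"
  shows "b = (\<Sum>i\<in>UNIV. y$i * b$i) *s p"
proof -
  define c where "c = (\<Sum>i\<in>UNIV. y$i * b$i)"
  have "k * c = (\<Sum>i\<in>UNIV. y$i * (k * b$i))"
    unfolding c_def sum_distrib_left by (intro sum.cong) auto
  also have "\<dots> = (\<Sum>i\<in>UNIV. l * (y$i * p$i))"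
    unfolding assms(2) by (intro sum.cong) auto
  finally have "k * c = l"
    using assms(1) by (simp only: sum_distrib_left[symmetric] mult_1_right)
  then have "k * b$i = k * (c * p$i)" for i
    unfolding assms(2) mult.assoc[symmetric] by simp
  then have "b = c *s p"
    using assms(3) by (simp add: vec_eq_iff)
  then show ?thesis
    by (simp only: c_def)
qed

lemma int_vec_primitive_factor:
  fixes c :: "int^'n"
  assumes "c \<noteq> 0"
  obtains d p y where "c = d *s p" and "(\<Sum>i\<in>UNIV. y$i * p$i) = 1"
proof -
  define S where "S = {k::nat. 0 < k \<and> (\<exists>y. int k = (\<Sum>i\<in>UNIV. y$i * c$i))}"
  obtain i0 where "c$i0 \<noteq> 0"
    using assms by (metis vec_eq_iff zero_index)
  then have "0 < (\<Sum>i\<in>UNIV. c$i * c$i)"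
    by (intro sum_pos2[of _ i0]) (auto simp: zero_less_mult_iff linorder_neq_iff)
  then have "nat (\<Sum>i\<in>UNIV. c$i * c$i) \<in> S"
    unfolding S_def by auto
  \<comment> \<open>the least positive value of the linear forms \<open>y \<bullet> c\<close>, i.e. the gcd of the entries of \<open>c\<close>\<close>
  define d where "d = (LEAST k. k \<in> S)"
  have "d \<in> S"
    unfolding d_def by (rule LeastI) fact
  then obtain y where "0 < d" and y: "int d = (\<Sum>i\<in>UNIV. y$i * c$i)"
    unfolding S_def by blast
  have d_dvd: "int d dvd c$j" for j
  proof (rule ccontr)
    assume "\<not> int d dvd c$j"
    define q where "q = c$j div int d"
    have mod_nonneg: "0 \<le> c$j mod int d"
      using \<open>0 < d\<close> by simp
    have "(\<Sum>i\<in>UNIV. axis j 1 $ i * c$i) = c$j"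
      by (simp add: axis_def mult_if_delta)
    then have "(\<Sum>i\<in>UNIV. (axis j 1 - q *s y)$i * c$i) = c$j - q * int d"
      by (simp add: y left_diff_distrib sum_subtractf sum_distrib_left mult.assoc)
    also have "\<dots> = c$j mod int d"
      by (simp add: q_def minus_div_mult_eq_mod)
    finally have "nat (c$j mod int d) \<in> S"
      using \<open>\<not> int d dvd c$j\<close> mod_nonneg unfolding S_def
      by (intro CollectI conjI exI[of _ "axis j 1 - q *s y"]) (auto simp: dvd_eq_mod_eq_0)
    then have "d \<le> nat (c$j mod int d)"
      unfolding d_def by (rule Least_le)
    moreover have "c$j mod int d < int d"
      using \<open>0 < d\<close> by simp
    ultimately show False
      using mod_nonneg by linarith
  qed
  define p where "p = (\<chi> i. c$i div int d)"
  have cp: "c = int d *s p"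
    using d_dvd by (simp add: p_def vec_eq_iff)
  have "int d * (\<Sum>i\<in>UNIV. y$i * p$i) = int d"
    using y by (subst (asm) cp) (simp add: sum_distrib_left algebra_simps)
  then have "(\<Sum>i\<in>UNIV. y$i * p$i) = 1"
    using \<open>0 < d\<close> by simp
  then show thesis
    using that cp by blast
qed

lemma int_rank_one_factor:
  fixes M :: "int^'n^'m" and u :: "rat^'m" and w :: "rat^'n"
  assumes uw: "\<And>i j. rat_of_int (M$i$j) = u$i * w$j"
  obtains p :: "int^'m" and a :: "int^'n" and y :: "int^'m"
  where "\<And>i j. M$i$j = p$i * a$j" and "(\<Sum>i\<in>UNIV. y$i * p$i) = 1"
proof (cases "M = 0")
  case True
  have "(\<Sum>i\<in>UNIV. axis k 1 $ i * axis k 1 $ i) = (1::int)" for k :: 'm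
    by (simp add: axis_def mult_if_delta)
  then show thesis
    using True by (intro that[of "axis undefined 1" 0 "axis undefined 1"]) simp_all
next
  case False
  then obtain i0 j0 where "M$i0$j0 \<noteq> 0"
    by (metis vec_eq_iff zero_index)
  define c where "c = (\<chi> i. M$i$j0)"
  have "c \<noteq> 0"
    using \<open>M$i0$j0 \<noteq> 0\<close> by (auto simp: c_def vec_eq_iff)
  then obtain d p y where cp: "c = d *s p" and yp: "(\<Sum>i\<in>UNIV. y$i * p$i) = 1"
    by (rule int_vec_primitive_factor)
  have "w$j0 \<noteq> 0"
    using \<open>M$i0$j0 \<noteq> 0\<close> uw[of i0 j0] by auto
  define a where "a = (\<chi> j. \<Sum>i\<in>UNIV. y$i * M$i$j)"
  have "M$i$j = p$i * a$j" for i j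
  proof -
    define t where "t = rat_of_int d * w$j / w$j0"
    have column: "rat_of_int (M$k$j) = rat_of_int (p$k) * t" for k
    proof -
      have "rat_of_int (M$k$j) = (u$k * w$j0) * (w$j / w$j0)"
        using uw \<open>w$j0 \<noteq> 0\<close> by simp
      also have "u$k * w$j0 = rat_of_int d * rat_of_int (p$k)"
        using uw[of k j0] arg_cong[OF cp, of "\<lambda>v. v$k"] by (simp add: c_def)
      finally show ?thesis
        by (simp add: t_def)
    qed
    have "rat_of_int (a$j) = (\<Sum>k\<in>UNIV. rat_of_int (y$k) * rat_of_int (M$k$j))"
      by (simp add: a_def)
    also have "\<dots> = t * rat_of_int (\<Sum>k\<in>UNIV. y$k * p$k)"
      by (simp add: column sum_distrib_left mult_ac)
    finally have "rat_of_int (a$j) = t"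
      using yp by simp
    then have "rat_of_int (M$i$j) = rat_of_int (p$i * a$j)"
      by (simp add: column)
    then show ?thesis
      by (simp only: of_int_eq_iff)
  qed
  then show thesis
    using yp by (rule that)
qed

lemma lat_reflection_primitive_marking:
  fixes \<sigma> :: "int^'n^'n"
  assumes "lat_reflection \<sigma>"
  obtains p \<beta> y where "strict_marking \<sigma> p \<beta>" and "(\<Sum>i\<in>UNIV. y$i * p$i) = 1"
proof -
  obtain u w :: "rat^'n" where uw: "\<And>i j. rat_of_int ((\<sigma> - mat 1)$i$j) = u$i * w$j"
    using lat_reflection_rank_one[OF assms] by blast
  obtain p a y where pa: "\<And>i j. (\<sigma> - mat 1)$i$j = p$i * a$j"
    and yp: "(\<Sum>i\<in>UNIV. y$i * p$i) = 1"
    using int_rank_one_factor[OF uw] by blast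
  define \<beta> where "\<beta> x = (\<Sum>j\<in>UNIV. a$j * x$j)" for x :: "int^'n"
  have "\<sigma>$i$j - mat 1$i$j = p$i * a$j" for i j
    using pa[of i j] by simp
  then have "(\<sigma> - mat 1) *v x = \<beta> x *s p" for x
    by (simp add: vec_eq_iff matrix_vector_mult_def \<beta>_def sum_distrib_left mult_ac)
  then have "\<sigma> *v x = x + \<beta> x *s p" for x
    by (metis matrix_vector_mult_diff_rdistrib matrix_vector_mul_lid diff_add_cancel add.commute)
  moreover have "\<beta> (x + x') = \<beta> x + \<beta> x'" for x x'
    by (simp add: \<beta>_def distrib_left sum.distrib)
  ultimately have "strict_marking \<sigma> p \<beta>"
    by (simp add: strict_marking_def)
  then show thesis
    using yp by (rule that)
qed

lemma matrix_vector_mult_smult: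
  fixes A :: "'a::comm_semiring_1^'n^'m"
  shows "A *v (c *s x) = c *s (A *v x)"
  by (simp add: vec_eq_iff matrix_vector_mult_def sum_distrib_left mult_ac)

lemma involution_marking_beta_self:
  assumes "\<sigma> ** \<sigma> = mat 1" and "\<sigma> \<noteq> mat 1" and marking: "strict_marking \<sigma> b \<beta>"
  shows "\<beta> b = -2"
proof -
  have \<sigma>: "\<sigma> *v x = x + \<beta> x *s b" for x
    using marking by (simp add: strict_marking_def)
  obtain x where "\<beta> x \<noteq> 0" and "b \<noteq> 0"
  proof (rule ccontr)
    assume "\<not> thesis"
    then have "\<sigma> *v x = mat 1 *v x" for x
      using that \<sigma> by (cases "b = 0") auto
    then show False
      using \<open>\<sigma> \<noteq> mat 1\<close> matrix_eq by blast
  qed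
  have "x = \<sigma> *v (\<sigma> *v x)"
    using assms(1) by (simp add: matrix_vector_mul_assoc)
  also have "\<dots> = x + (\<beta> x * (2 + \<beta> b)) *s b"
    by (simp add: \<sigma>[of x] \<sigma>[of b] matrix_vector_right_distrib matrix_vector_mult_smult
        vec_eq_iff algebra_simps)
  finally have "(\<beta> x * (2 + \<beta> b)) *s b = 0"
    by simp
  then show ?thesis
    using \<open>\<beta> x \<noteq> 0\<close> \<open>b \<noteq> 0\<close> by (auto simp: vec_eq_iff)
qed

lemma strict_marking_halve:
  assumes "strict_marking \<sigma> b \<beta>" and "\<And>x. even (\<beta> x)"
  shows "strict_marking \<sigma> (2 *s b) (\<lambda>x. \<beta> x div 2)"
proof -
  have "(\<beta> x div 2) *s (2 *s b) = \<beta> x *s b" for x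
    using assms(2)[of x] by (simp add: vector_smult_assoc)
  then have "\<sigma> *v x = x + (\<beta> x div 2) *s (2 *s b)" for x
    using assms(1) by (simp add: strict_marking_def)
  moreover have "\<beta> (x + x') div 2 = \<beta> x div 2 + \<beta> x' div 2" for x x'
    using assms by (simp add: strict_marking_def div_add)
  ultimately show ?thesis
    by (simp add: strict_marking_def)
qed

lemma real_of_ivec_nth [simp]: "real_of_ivec x $ i = real_of_int (x$i)"
  by (simp add: real_of_ivec_def)

lemma real_of_imat_mult_ivec:
  "real_of_imat A *v real_of_ivec x = real_of_ivec (A *v x)"
  by (simp add: vec_eq_iff matrix_vector_mult_def real_of_imat_def)

lemma tcls_eq_iff: "tcls v = tcls w \<longleftrightarrow> (\<forall>i. v$i - w$i \<in> \<int>)"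
proof
  assume "tcls v = tcls w"
  moreover have "v \<in> tcls v"
    by (simp add: tcls_def)
  ultimately show "\<forall>i. v$i - w$i \<in> \<int>"
    by (simp add: tcls_def)
next
  assume vw: "\<forall>i. v$i - w$i \<in> \<int>"
  have "z$i - v$i \<in> \<int> \<longleftrightarrow> z$i - w$i \<in> \<int>" for z i
  proof
    assume "z$i - v$i \<in> \<int>"
    then have "(z$i - v$i) + (v$i - w$i) \<in> \<int>"
      using vw[rule_format, of i] by (rule Ints_add)
    then show "z$i - w$i \<in> \<int>"
      by simp
  next
    assume "z$i - w$i \<in> \<int>"
    then have "(z$i - w$i) - (v$i - w$i) \<in> \<int>"
      using vw[rule_format, of i] by (rule Ints_diff)
    then show "z$i - v$i \<in> \<int>"
      by simp
  qed
  then show "tcls v = tcls w"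
    by (simp add: tcls_def)
qed

lemma tcls_half_uminus:
  "tcls ((1/2) *s real_of_ivec (- b)) = tcls ((1/2) *s real_of_ivec b)"
  by (simp add: tcls_eq_iff)

lemma half_integral_iff:
  fixes v :: "real^'n"
  shows "(\<forall>i. 2 * v$i \<in> \<int>) \<longleftrightarrow> (\<exists>z. v = (1/2) *s real_of_ivec z)"
proof
  assume "\<forall>i. 2 * v$i \<in> \<int>"
  then have "\<forall>i. \<exists>n. 2 * v$i = real_of_int n"
    by (metis Ints_cases)
  then obtain z where z: "\<And>i. 2 * v$i = real_of_int (z i)"
    by metis
  show "\<exists>z. v = (1/2) *s real_of_ivec z"
    by (intro exI[of _ "\<chi> i. z i"]) (simp add: vec_eq_iff z[symmetric])
qed auto

lemma half_of_int_in_Ints_iff: "real_of_int k / 2 \<in> \<int> \<longleftrightarrow> even k"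
proof
  assume "real_of_int k / 2 \<in> \<int>"
  then obtain m where "real_of_int k / 2 = real_of_int m"
    by (auto elim: Ints_cases)
  then have "k = 2 * m"
    by linarith
  then show "even k"
    by simp
qed (auto elim!: evenE)

lemma trivial_mod2_iff:
  "trivial_mod2 \<sigma> \<longleftrightarrow> (\<forall>z i. even ((\<sigma> *v z - z)$i))"
proof -
  have action: "(real_of_imat \<sigma> *v ((1/2) *s real_of_ivec z))$i - ((1/2) *s real_of_ivec z)$i
      = real_of_int ((\<sigma> *v z - z)$i) / 2" for z i
    by (simp add: scalar_mult_eq_scaleR matrix_vector_mult_scaleR real_of_imat_mult_ivec)
  show ?thesis
  proof
    assume "trivial_mod2 \<sigma>"
    then show "\<forall>z i. even ((\<sigma> *v z - z)$i)"
      unfolding trivial_mod2_def half_integral_iff by (metis action half_of_int_in_Ints_iff)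
  next
    assume "\<forall>z i. even ((\<sigma> *v z - z)$i)"
    then show "trivial_mod2 \<sigma>"
      unfolding trivial_mod2_def half_integral_iff by (metis action half_of_int_in_Ints_iff)
  qed
qed

abbreviation marking_class ::
    "int^'n \<Rightarrow> (int^'n \<Rightarrow> int) \<Rightarrow> ((int^'n) \<times> (int^'n \<Rightarrow> int)) set"
  where "marking_class b \<beta> \<equiv> {(b, \<beta>), (-b, \<lambda>x. - \<beta> x)}"

locale primitive_reflection_marking =
  fixes \<sigma> :: "int^'n^'n" and p :: "int^'n" and \<beta>\<^sub>0 :: "int^'n \<Rightarrow> int" and y :: "int^'n"
  assumes involution: "\<sigma> ** \<sigma> = mat 1"
    and not_identity: "\<sigma> \<noteq> mat 1"
    and marking: "strict_marking \<sigma> p \<beta>\<^sub>0"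
    and primitive: "(\<Sum>i\<in>UNIV. y$i * p$i) = 1"
begin

lemma apply_marking: "\<sigma> *v x = x + \<beta>\<^sub>0 x *s p"
  using marking by (simp add: strict_marking_def)

lemma p_nonzero: "p \<noteq> 0"
  using primitive by auto

lemma smult_p_cancel: "k *s p = l *s p \<Longrightarrow> k = l"
  using p_nonzero by (auto simp: vec_eq_iff)

lemma anti_invariant_twice:
  assumes "\<sigma> *v z = - z"
  shows "2 * z$i = - \<beta>\<^sub>0 z * p$i"
proof -
  have "(\<sigma> *v z)$i = - z$i"
    using assms by simp
  moreover have "(\<sigma> *v z)$i = z$i + \<beta>\<^sub>0 z * p$i"
    by (simp add: apply_marking)
  ultimately show ?thesis
    by simp
qed

lemma strict_marking_multiple:
  assumes b: "strict_marking \<sigma> b \<beta>"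
  obtains c where "b = c *s p" and "\<And>x. \<beta>\<^sub>0 x = c * \<beta> x" and "c \<in> {-2, -1, 1, 2}"
proof -
  have "\<beta> b = -2"
    using involution not_identity b by (rule involution_marking_beta_self)
  then have "\<sigma> *v b = - b"
    using b by (simp add: strict_marking_def vec_eq_iff)
  then have twice_b: "2 * b$i = - \<beta>\<^sub>0 b * p$i" for i
    by (rule anti_invariant_twice)
  define c where "c = (\<Sum>i\<in>UNIV. y$i * b$i)"
  have bc: "b = c *s p"
    unfolding c_def using primitive twice_b by (rule primitive_multiple) simp
  have "\<beta>\<^sub>0 x *s p = \<beta> x *s b" for x
    using apply_marking[of x] b by (simp add: strict_marking_def)
  also have "\<beta> x *s b = (c * \<beta> x) *s p" for x
    by (simp add: bc vector_smult_assoc mult.commute)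
  finally have "\<beta>\<^sub>0 x *s p = (c * \<beta> x) *s p" for x .
  then have \<beta>c: "\<beta>\<^sub>0 x = c * \<beta> x" for x
    by (rule smult_p_cancel)
  have "c * \<beta> p = -2"
    using \<beta>c[of p] involution_marking_beta_self[OF involution not_identity marking] by simp
  then have "c dvd 2"
    by (metis dvd_minus_iff dvd_triv_left)
  then have "c \<in> {-2, -1, 1, 2}"
    using dvd_imp_le_int[of 2 c] by (cases "c = 0") (auto simp: abs_le_iff)
  with bc \<beta>c show thesis
    by (rule that)
qed

lemma lat_marking_iff:
  "lat_marking \<sigma> m \<longleftrightarrow>
     m = marking_class p \<beta>\<^sub>0 \<or>
     (\<forall>x. even (\<beta>\<^sub>0 x)) \<and> m = marking_class (2 *s p) (\<lambda>x. \<beta>\<^sub>0 x div 2)"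
proof
  assume "lat_marking \<sigma> m"
  then obtain b \<beta> where b: "strict_marking \<sigma> b \<beta>" and m: "m = marking_class b \<beta>"
    unfolding lat_marking_def by blast
  obtain c where bc: "b = c *s p" and \<beta>c: "\<And>x. \<beta>\<^sub>0 x = c * \<beta> x"
    and "c \<in> {-2, -1, 1, 2}"
    using strict_marking_multiple[OF b] by blast
  then consider "c = 1" | "c = -1" | "c = 2" | "c = -2"
    by auto
  then show "m = marking_class p \<beta>\<^sub>0 \<or>
     (\<forall>x. even (\<beta>\<^sub>0 x)) \<and> m = marking_class (2 *s p) (\<lambda>x. \<beta>\<^sub>0 x div 2)"
  proof cases
    case 1
    then have "b = p" and "\<beta> = \<beta>\<^sub>0"
      using bc \<beta>c by (simp_all add: fun_eq_iff)
    then show ?thesis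
      using m by simp
  next
    case 2
    then have "b = - p" and "\<beta> = (\<lambda>x. - \<beta>\<^sub>0 x)"
      using bc \<beta>c by (simp_all add: fun_eq_iff vec_eq_iff)
    then show ?thesis
      using m by auto
  next
    case 3
    then have "b = 2 *s p" and "\<beta> = (\<lambda>x. \<beta>\<^sub>0 x div 2)" and "\<forall>x. even (\<beta>\<^sub>0 x)"
      using bc \<beta>c by (simp_all add: fun_eq_iff)
    then show ?thesis
      using m by simp
  next
    case 4
    then have "b = - (2 *s p)" and "\<beta> = (\<lambda>x. - (\<beta>\<^sub>0 x div 2))" and "\<forall>x. even (\<beta>\<^sub>0 x)"
      using bc \<beta>c by (simp_all add: fun_eq_iff vec_eq_iff zdiv_zminus1_eq_if)
    then show ?thesis
      using m by auto
  qed
next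
  show "m = marking_class p \<beta>\<^sub>0 \<or>
      (\<forall>x. even (\<beta>\<^sub>0 x)) \<and> m = marking_class (2 *s p) (\<lambda>x. \<beta>\<^sub>0 x div 2) \<Longrightarrow>
    lat_marking \<sigma> m"
    using marking strict_marking_halve[OF marking] unfolding lat_marking_def by blast
qed

lemma trivial_mod2_iff_even: "trivial_mod2 \<sigma> \<longleftrightarrow> (\<forall>x. even (\<beta>\<^sub>0 x))"
proof -
  have entry: "(\<sigma> *v x - x)$i = \<beta>\<^sub>0 x * p$i" for x i
    by (simp add: apply_marking)
  show ?thesis
    unfolding trivial_mod2_iff
  proof (intro iffI allI)
    fix x
    assume "\<forall>z i. even ((\<sigma> *v z - z)$i)"
    then have "2 dvd \<beta>\<^sub>0 x * p$i" for i
      by (simp only: entry)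
    then show "even (\<beta>\<^sub>0 x)"
      by (rule primitive_dvd[OF primitive])
  next
    fix z i
    assume "\<forall>x. even (\<beta>\<^sub>0 x)"
    then show "even ((\<sigma> *v z - z)$i)"
      unfolding entry by simp
  qed
qed

lemma span_anti_invariant:
  "span (real_of_ivec ` {z. \<sigma> *v z = - z}) = span {real_of_ivec p}"
proof
  have "real_of_ivec z \<in> span {real_of_ivec p}" if "\<sigma> *v z = - z" for z
  proof -
    have "real_of_int (z$i) = (- real_of_int (\<beta>\<^sub>0 z) / 2) * real_of_int (p$i)" for i
      using arg_cong[OF anti_invariant_twice[OF that, of i], of real_of_int]
      by (simp add: field_simps)
    then have "real_of_ivec z = (- real_of_int (\<beta>\<^sub>0 z) / 2) *\<^sub>R real_of_ivec p"
      by (simp add: vec_eq_iff)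
    moreover have "(- real_of_int (\<beta>\<^sub>0 z) / 2) *\<^sub>R real_of_ivec p \<in> span {real_of_ivec p}"
      by (intro span_scale span_base singletonI)
    ultimately show ?thesis
      by simp
  qed
  then have "real_of_ivec ` {z. \<sigma> *v z = - z} \<subseteq> span {real_of_ivec p}"
    by blast
  then show "span (real_of_ivec ` {z. \<sigma> *v z = - z}) \<subseteq> span {real_of_ivec p}"
    by (simp add: span_minimal)
  have "\<sigma> *v p = - p"
    using apply_marking[of p] involution_marking_beta_self[OF involution not_identity marking]
    by (simp add: vec_eq_iff)
  then show "span {real_of_ivec p} \<subseteq> span (real_of_ivec ` {z. \<sigma> *v z = - z})"
    by (intro span_mono) blast
qed

lemma half_p_not_integral: "\<exists>i. ((1/2) *s real_of_ivec p)$i \<notin> \<int>"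
proof (rule ccontr)
  assume integral: "\<nexists>i. ((1/2) *s real_of_ivec p)$i \<notin> \<int>"
  have "(1/2 :: real) \<in> \<int>"
    by (rule primitive_Ints[OF primitive]) (use integral in auto)
  then obtain m where "1/2 = real_of_int m"
    by (auto elim: Ints_cases)
  then show False
    by (cases "m \<le> 0") linarith+
qed

lemma torus_marking_iff:
  "torus_marking \<sigma> h \<longleftrightarrow>
     h = tcls ((1/2) *s real_of_ivec p) \<or> trivial_mod2 \<sigma> \<and> h = tcls 0"
proof
  assume "torus_marking \<sigma> h"
  then obtain v where h: "h = tcls v" and "v \<in> span {real_of_ivec p}"
    and half: "\<forall>i. 2 * v$i \<in> \<int>"
    and nontrivial: "\<not> trivial_mod2 \<sigma> \<longrightarrow> (\<exists>i. v$i \<notin> \<int>)"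
    unfolding torus_marking_def span_anti_invariant by blast
  then obtain s where v: "v = s *\<^sub>R real_of_ivec p"
    by (auto simp: span_singleton)
  have "2 * s \<in> \<int>"
    using primitive by (rule primitive_Ints) (use half v in \<open>simp add: mult.assoc\<close>)
  then obtain n where n: "2 * s = real_of_int n"
    by (auto elim: Ints_cases)
  show "h = tcls ((1/2) *s real_of_ivec p) \<or> trivial_mod2 \<sigma> \<and> h = tcls 0"
  proof (cases "even n")
    case True
    then obtain k where "s = real_of_int k"
      using n by (auto elim!: evenE)
    then have "\<forall>i. v$i \<in> \<int>"
      using v by simp
    then show ?thesis
      using nontrivial by (simp add: h tcls_eq_iff)
  next
    case False
    then obtain k where "n = 2 * k + 1"
      by (auto elim: oddE)
    then have "2 * s = 2 * real_of_int k + 1"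
      using n by simp
    then have "s = real_of_int k + 1/2"
      by linarith
    then have "\<forall>i. v$i - ((1/2) *s real_of_ivec p)$i \<in> \<int>"
      using v by (simp add: algebra_simps)
    then show ?thesis
      by (simp add: h tcls_eq_iff)
  qed
next
  have "real_of_ivec p \<in> span (real_of_ivec ` {z. \<sigma> *v z = - z})"
    by (simp add: span_anti_invariant span_base)
  then have "(1/2) *s real_of_ivec p \<in> span (real_of_ivec ` {z. \<sigma> *v z = - z})"
    by (simp add: scalar_mult_eq_scaleR span_scale)
  then have "torus_marking \<sigma> (tcls ((1/2) *s real_of_ivec p))"
    unfolding torus_marking_def using half_p_not_integral
    by (intro exI[of _ "(1/2) *s real_of_ivec p"]) auto
  moreover have "trivial_mod2 \<sigma> \<Longrightarrow> torus_marking \<sigma> (tcls 0)"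
    unfolding torus_marking_def by (auto intro: span_zero)
  ultimately show "h = tcls ((1/2) *s real_of_ivec p) \<or> trivial_mod2 \<sigma> \<and> h = tcls 0 \<Longrightarrow>
    torus_marking \<sigma> h"
    by blast
qed

end

theorem lemma2p18:
  fixes \<sigma> :: "int^'n^'n"
  assumes "lat_reflection \<sigma>"
  shows "\<exists>f. bij_betw f {m. lat_marking \<sigma> m} {h. torus_marking \<sigma> h} \<and>
    (\<forall>b \<beta>. strict_marking \<sigma> b \<beta> \<longrightarrow>
       f {(b, \<beta>), (-b, \<lambda>x. - \<beta> x)} = tcls ((1/2) *s real_of_ivec b))"
proof -
  obtain p \<beta>\<^sub>0 y where "strict_marking \<sigma> p \<beta>\<^sub>0" and "(\<Sum>i\<in>UNIV. y$i * p$i) = 1"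
    using assms by (rule lat_reflection_primitive_marking)
  then interpret primitive_reflection_marking \<sigma> p \<beta>\<^sub>0 y
    using lat_reflection_involution[OF assms] lat_reflection_neq_id[OF assms]
    by unfold_locales
  \<comment> \<open>\<open>b\<close> and \<open>-b\<close> have the same half modulo \<open>\<int>\<^sup>n\<close>, so no representative needs to be chosen\<close>
  define f :: "((int^'n) \<times> (int^'n \<Rightarrow> int)) set \<Rightarrow> (real^'n) set"
    where "f m = (\<Union>(b, _)\<in>m. tcls ((1/2) *s real_of_ivec b))" for m
  have f: "f (marking_class b \<beta>) = tcls ((1/2) *s real_of_ivec b)" for b \<beta>
    using tcls_half_uminus[of b] by (simp add: f_def)
  let ?even = "\<forall>x. even (\<beta>\<^sub>0 x)"
  have "{m. lat_marking \<sigma> m} =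
      insert (marking_class p \<beta>\<^sub>0)
        (if ?even then {marking_class (2 *s p) (\<lambda>x. \<beta>\<^sub>0 x div 2)} else {})"
    by (auto simp: lat_marking_iff)
  moreover have "{h. torus_marking \<sigma> h} =
      insert (tcls ((1/2) *s real_of_ivec p)) (if ?even then {tcls 0} else {})"
    by (auto simp: torus_marking_iff trivial_mod2_iff_even)
  moreover have "f (marking_class (2 *s p) (\<lambda>x. \<beta>\<^sub>0 x div 2)) = tcls 0"
    by (simp add: f tcls_eq_iff)
  moreover have "tcls ((1/2) *s real_of_ivec p) \<noteq> tcls 0"
    using half_p_not_integral by (simp add: tcls_eq_iff)
  ultimately have "bij_betw f {m. lat_marking \<sigma> m} {h. torus_marking \<sigma> h}"
    by (cases ?even) (auto simp: bij_betw_def f)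
  then show ?thesis
    using f by blast
qed

end
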